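(* Let $N$ be a finite set and $\mathcal{F} \subseteq 2^N$ a set family. If $\mathcal{F}$ satisfies (B$^\natural$-EXC$_{\rm m}$), then $\mathcal{F}$ satisfies (B$^\natural$-EXC$_{\pm}$).
   Context: Notation: $X - i = X \setminus \{i\}$, $Y + i = Y \cup \{i\}$, $X - i + j = (X\setminus\{i\})\cup\{j\}$, $Y + i - k = (Y \cup\{i\})\setminus\{k\}$. (B$^\natural$-EXC$_{\rm m}$): for any $X, Y \in \mathcal{F}$ and $I \subseteq X\setminus Y$ there exists $J \subseteq Y\setminus X$ with $(X\setminus I)\cup J \in \mathcal{F}$ and $(Y\setminus J)\cup I \in \mathcal{F}$. (B$^\natural$-EXC$_{\pm}$): for any $X, Y \in \mathcal{F}$ and $i \in X\setminus Y$, both (a) and (b) hold, where (a): $X - i \in \mathcal{F}$, or $X - i + j \in \mathcal{F}$ for some $j \in Y\setminus X$; (b): $Y + i \in \mathcal{F}$, or $Y + i - k \in \mathcal{F}$ for some $k \in Y\setminus X$. *)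

theory Defs
  imports Main
begin

definition exc_m :: "'a set set \<Rightarrow> bool" where
  "exc_m F \<longleftrightarrow> (\<forall>X\<in>F. \<forall>Y\<in>F. \<forall>I. I \<subseteq> X - Y \<longrightarrow>
      (\<exists>J. J \<subseteq> Y - X \<and> (X - I) \<union> J \<in> F \<and> (Y - J) \<union> I \<in> F))"

definition exc_pm :: "'a set set \<Rightarrow> bool" where
  "exc_pm F \<longleftrightarrow> (\<forall>X\<in>F. \<forall>Y\<in>F. \<forall>i\<in>X - Y.
      (X - {i} \<in> F \<or> (\<exists>j\<in>Y - X. insert j (X - {i}) \<in> F)) \<and>
      (insert i Y \<in> F \<or> (\<exists>k\<in>Y - X. (insert i Y) - {k} \<in> F)))"

end

theory Submission
  imports Defs
begin

text \<open>Applying (B\<natural>-EXC_m) to \<open>I = {i}\<close> yields a compensating set \<open>J \<subseteq> Y - X\<close> with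
  \<open>X - i \<union> J\<close> and \<open>Y - J + i\<close> in \<open>F\<close>. Exchanging all of \<open>J\<close> but one element \<open>j\<close> between
  such a set and \<open>X\<close> (resp. \<open>Y\<close>) either yields the single swap with \<open>j\<close> or, since the
  other side can only return \<open>i\<close>, the same situation with \<open>J - j\<close> in place of \<open>J\<close>;
  so finiteness of \<open>J\<close> gives (B\<natural>-EXC_\<plusminus>).\<close>

lemma exc_mD:
  assumes "exc_m F" "X \<in> F" "Y \<in> F" "I \<subseteq> X - Y"
  obtains J where "J \<subseteq> Y - X" "(X - I) \<union> J \<in> F" "(Y - J) \<union> I \<in> F"
  using assms(1)[unfolded exc_m_def, rule_format, OF assms(2-4)] that by blast

lemma exc_m_delete_or_swap:
  assumes m: "exc_m F" and XF: "X \<in> F" and iX: "i \<in> X"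
    and "finite J" "J \<inter> X = {}" "(X - {i}) \<union> J \<in> F"
  shows "X - {i} \<in> F \<or> (\<exists>j\<in>J. insert j (X - {i}) \<in> F)"
  using assms(4-)
proof (induction J rule: finite_induct)
  case empty
  then show ?case by simp
next
  case (insert j J)
  let ?X' = "(X - {i}) \<union> insert j J"
  have "J \<subseteq> ?X' - X" using insert.prems(1) by auto
  then obtain J' where J': "J' \<subseteq> X - ?X'" "(?X' - J) \<union> J' \<in> F" "(X - J') \<union> J \<in> F"
    by (rule exc_mD[OF m insert.prems(2) XF])
  have "X - ?X' = {i}" using iX insert.prems(1) by auto
  with J'(1) consider "J' = {}" | "J' = {i}" by blast
  then show ?case
  proof cases
    case 1
    have "(?X' - J) \<union> J' = insert j (X - {i})"
      using 1 insert.hyps(2) insert.prems(1) by auto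
    with J'(2) have "insert j (X - {i}) \<in> F" by simp
    then show ?thesis by blast
  next
    case 2
    then have "(X - {i}) \<union> J \<in> F" using J'(3) by simp
    moreover have "J \<inter> X = {}" using insert.prems(1) by auto
    ultimately show ?thesis using insert.IH by auto
  qed
qed

lemma exc_m_insert_or_swap:
  assumes m: "exc_m F" and YF: "Y \<in> F" and iY: "i \<notin> Y"
    and "finite J" "J \<subseteq> Y" "insert i (Y - J) \<in> F"
  shows "insert i Y \<in> F \<or> (\<exists>k\<in>J. insert i Y - {k} \<in> F)"
  using assms(4-)
proof (induction J rule: finite_induct)
  case empty
  then show ?case by simp
next
  case (insert j J)
  let ?Y' = "insert i (Y - insert j J)"
  have "J \<subseteq> Y - ?Y'" using insert.prems(1) iY by auto
  then obtain J' where J': "J' \<subseteq> ?Y' - Y" "(Y - J) \<union> J' \<in> F" "(?Y' - J') \<union> J \<in> F"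
    by (rule exc_mD[OF m YF insert.prems(2)])
  have "?Y' - Y = {i}" using iY by auto
  with J'(1) consider "J' = {}" | "J' = {i}" by blast
  then show ?case
  proof cases
    case 1
    have "(?Y' - J') \<union> J = insert i Y - {j}"
      using 1 insert.hyps(2) insert.prems(1) iY by auto
    with J'(3) have "insert i Y - {j} \<in> F" by simp
    then show ?thesis by blast
  next
    case 2
    then have "insert i (Y - J) \<in> F" using J'(2) by simp
    moreover have "J \<subseteq> Y" using insert.prems(1) by simp
    ultimately show ?thesis using insert.IH by auto
  qed
qed

theorem proposition5:
  fixes N :: "'a set" and F :: "'a set set"
  assumes "finite N" and "F \<subseteq> Pow N"
  assumes "exc_m F"
  shows "exc_pm F"
  unfolding exc_pm_def
proof (intro ballI conjI)
  fix X Y i assume XF: "X \<in> F" and YF: "Y \<in> F" and i: "i \<in> X - Y"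
  then have "{i} \<subseteq> X - Y" by simp
  then obtain J where J: "J \<subseteq> Y - X" "(X - {i}) \<union> J \<in> F" "(Y - J) \<union> {i} \<in> F"
    by (rule exc_mD[OF assms(3) XF YF])
  have "finite Y" using YF assms(1,2) by (auto intro: finite_subset)
  with J(1) have "finite J" by (auto intro: finite_subset)
  have "J \<inter> X = {}" "J \<subseteq> Y" using J(1) by auto
  show "X - {i} \<in> F \<or> (\<exists>j\<in>Y - X. insert j (X - {i}) \<in> F)"
    using exc_m_delete_or_swap[OF assms(3) XF _ \<open>finite J\<close> \<open>J \<inter> X = {}\<close> J(2)] i J(1)
    by auto
  have "insert i (Y - J) \<in> F" using J(3) by simp
  then show "insert i Y \<in> F \<or> (\<exists>k\<in>Y - X. insert i Y - {k} \<in> F)"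
    using exc_m_insert_or_swap[OF assms(3) YF _ \<open>finite J\<close> \<open>J \<subseteq> Y\<close>] i J(1)
    by auto
qed

end
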